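(* Every scattered compact Hausdorff space $K$ of height $2$ has the regular extension property.
   Context: Height $2$ means that the second Cantor--Bendixson derivative $K^{(2)}$ is empty (where $K'$ is the set of non-isolated points of $K$ and $K^{(2)}=(K')'$). $C(K)$ is the Banach space of real-valued continuous functions on $K$ with the supremum norm and $\mathbf 1_K$ its unit. For a closed $F\subseteq K$, a regular extension operator for $F$ in $K$ is a bounded linear map $E:C(F)\to C(K)$ with $E(f)|_F=f$ for all $f$, $\|E\|\le1$ and $E(\mathbf 1_F)=\mathbf 1_K$. $K$ has the regular extension property if every nonempty closed subset admits a regular extension operator in $K$. *)

theory Defs
  imports "HOL-Analysis.Analysis"
begin

definition scattered_space :: "'a topology \<Rightarrow> bool" where
  "scattered_space X \<longleftrightarrow>
     (\<forall>S. S \<subseteq> topspace X \<and> S \<noteq> {} \<longrightarrow> (\<exists>x\<in>S. x \<notin> X derived_set_of S))"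

definition CB_deriv :: "'a topology \<Rightarrow> 'a set" where
  "CB_deriv X = X derived_set_of (topspace X)"

definition CB_deriv2 :: "'a topology \<Rightarrow> 'a set" where
  "CB_deriv2 X = CB_deriv (subtopology X (CB_deriv X))"

text \<open>C(S) as concrete carrier: continuous real functions on the subspace S,
  normalised to be 0 outside S (so each element of C(S) has a unique representative).\<close>
definition Cfun :: "'a topology \<Rightarrow> 'a set \<Rightarrow> ('a \<Rightarrow> real) set" where
  "Cfun X S = {f. continuous_map (subtopology X S) euclideanreal f \<and> (\<forall>x. x \<notin> S \<longrightarrow> f x = 0)}"

definition unit_fun :: "'a set \<Rightarrow> 'a \<Rightarrow> real" where
  "unit_fun S = (\<lambda>x. if x \<in> S then 1 else 0)"

definition regular_extension_operator ::
  "'a topology \<Rightarrow> 'a set \<Rightarrow> (('a \<Rightarrow> real) \<Rightarrow> ('a \<Rightarrow> real)) \<Rightarrow> bool" where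
  "regular_extension_operator X F E \<longleftrightarrow>
     (\<forall>f\<in>Cfun X F. E f \<in> Cfun X (topspace X)) \<and>
     (\<forall>f\<in>Cfun X F. \<forall>g\<in>Cfun X F. \<forall>a b::real.
         E (\<lambda>x. a * f x + b * g x) = (\<lambda>x. a * E f x + b * E g x)) \<and>
     (\<forall>f\<in>Cfun X F. \<forall>x\<in>F. E f x = f x) \<and>
     (\<forall>f\<in>Cfun X F. \<forall>x\<in>topspace X. \<bar>E f x\<bar> \<le> (SUP y\<in>F. \<bar>f y\<bar>)) \<and>
     E (unit_fun F) = unit_fun (topspace X)"

definition regular_extension_property :: "'a topology \<Rightarrow> bool" where
  "regular_extension_property X \<longleftrightarrow>
     (\<forall>F. closedin X F \<and> F \<noteq> {} \<longrightarrow> (\<exists>E. regular_extension_operator X F E))"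

end

theory Submission
  imports Defs
begin

text \<open>The derived set \<open>K'\<close> is closed, and \<open>K'' = {}\<close> says it is discrete; being compact, it is
  finite. Separating its points by pairwise disjoint open sets \<open>V q\<close>, one retracts \<open>K\<close> onto a
  nonempty closed \<open>F\<close> by sending \<open>V q - F\<close> to \<open>q\<close> for \<open>q \<in> K' \<inter> F\<close> and every other point
  outside \<open>F\<close> to one fixed point of \<open>F\<close>; continuity only has to be checked at the finitely many
  non-isolated points. Composition with a retraction is a regular extension operator.\<close>

lemma finite_CB_deriv:
  assumes "compact_space K" "t1_space K" "CB_deriv2 K = {}"
  shows "finite (CB_deriv K)"
proof -
  define D where "D = CB_deriv K"
  have "D \<subseteq> topspace K"
    unfolding D_def CB_deriv_def by (rule derived_set_of_subset_topspace)
  then have "D \<inter> K derived_set_of D = {}"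
    using assms(3) unfolding CB_deriv2_def CB_deriv_def D_def[unfolded CB_deriv_def, symmetric]
    by (simp add: derived_set_of_subtopology Int_absorb1 Int_absorb2)
  moreover have "compactin K D"
    unfolding D_def CB_deriv_def
    using assms(1,2) closedin_compact_space closedin_derived_set_of_gen by blast
  ultimately show ?thesis
    unfolding D_def using discrete_compactin_eq_finite by blast
qed

lemma Hausdorff_space_finite_disjoint_nbhds:
  assumes "Hausdorff_space X" "finite D" "D \<subseteq> topspace X"
  obtains V where "\<And>q. q \<in> D \<Longrightarrow> openin X (V q) \<and> q \<in> V q"
    and "\<And>q r. q \<in> D \<Longrightarrow> r \<in> D \<Longrightarrow> q \<noteq> r \<Longrightarrow> disjnt (V q) (V r)"
proof -
  obtain U W where UW: "\<And>q r. q \<in> topspace X \<Longrightarrow> r \<in> topspace X \<Longrightarrow> q \<noteq> r \<Longrightarrow>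
      openin X (U q r) \<and> openin X (W q r) \<and> q \<in> U q r \<and> r \<in> W q r \<and> disjnt (U q r) (W q r)"
    using assms(1) unfolding Hausdorff_space_def by metis
  define V where "V q = (\<Inter>r \<in> D - {q}. U q r \<inter> W r q) \<inter> topspace X" for q
  show thesis
  proof
    show "openin X (V q) \<and> q \<in> V q" if "q \<in> D" for q
    proof
      show "openin X (V q)"
        unfolding V_def using assms(2,3) that UW by (intro openin_INT openin_Int) auto
      show "q \<in> V q"
        unfolding V_def using assms(3) that UW by auto
    qed
    show "disjnt (V q) (V r)" if "q \<in> D" "r \<in> D" "q \<noteq> r" for q r
    proof -
      have "V q \<inter> V r \<subseteq> U q r \<inter> W q r"
        unfolding V_def using that by auto
      then show ?thesis
        using UW[of q r] that assms(3) by (auto simp: disjnt_def)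
    qed
  qed
qed

lemma continuous_map_if_continuous_at_derived_points:
  assumes "f \<in> topspace X \<rightarrow> topspace Y"
    and "\<And>x U. x \<in> X derived_set_of topspace X \<Longrightarrow> openin Y U \<Longrightarrow> f x \<in> U \<Longrightarrow>
           \<exists>T. openin X T \<and> x \<in> T \<and> f ` T \<subseteq> U"
  shows "continuous_map X Y f"
  unfolding continuous_map_def
proof (intro conjI allI impI)
  show "f \<in> topspace X \<rightarrow> topspace Y" by (fact assms(1))
  fix U assume U: "openin Y U"
  show "openin X {x \<in> topspace X. f x \<in> U}"
  proof (subst openin_subopen, intro ballI)
    fix x assume x: "x \<in> {x \<in> topspace X. f x \<in> U}"
    show "\<exists>T. openin X T \<and> x \<in> T \<and> T \<subseteq> {x \<in> topspace X. f x \<in> U}"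
    proof (cases "x \<in> X derived_set_of topspace X")
      case True
      then obtain T where "openin X T" "x \<in> T" "f ` T \<subseteq> U"
        using assms(2) U x by blast
      then show ?thesis
        using openin_subset by (intro exI[of _ T]) fastforce
    next
      case False
      then obtain T where T: "openin X T" "x \<in> T" "\<And>y. y \<in> topspace X \<Longrightarrow> y \<in> T \<Longrightarrow> y = x"
        using x unfolding in_derived_set_of by auto
      then have "T = {x}"
        using openin_subset by fastforce
      then show ?thesis
        using T x by auto
    qed
  qed
qed

lemma retraction_onto_closedin_if_finite_derived_set:
  assumes "Hausdorff_space K" "finite (K derived_set_of topspace K)"
    and "closedin K F" "F \<noteq> {}"
  obtains \<rho> where "continuous_map K (subtopology K F) \<rho>" "\<And>x. x \<in> F \<Longrightarrow> \<rho> x = x"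
proof -
  define D where "D = K derived_set_of topspace K"
  have D: "finite D" "D \<subseteq> topspace K"
    using assms(2) unfolding D_def by (auto simp: derived_set_of_subset_topspace)
  obtain V where V: "\<And>q. q \<in> D \<Longrightarrow> openin K (V q) \<and> q \<in> V q"
    and Vdisj: "\<And>q r. q \<in> D \<Longrightarrow> r \<in> D \<Longrightarrow> q \<noteq> r \<Longrightarrow> disjnt (V q) (V r)"
    using Hausdorff_space_finite_disjoint_nbhds[OF assms(1) D] by blast
  obtain a where a: "a \<in> F"
    using assms(4) by blast
  have F: "F \<subseteq> topspace K"
    using assms(3) closedin_subset by blast
  define \<rho> where "\<rho> x = (if x \<in> F then x else if \<exists>p \<in> D \<inter> F. x \<in> V p
      then (THE p. p \<in> D \<inter> F \<and> x \<in> V p) else a)" for x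
  have \<rho>_V: "\<rho> x = p" if "x \<notin> F" "p \<in> D \<inter> F" "x \<in> V p" for x p
  proof -
    have "(THE p. p \<in> D \<inter> F \<and> x \<in> V p) = p"
      using that Vdisj by (intro the_equality) (auto simp: disjnt_def)
    then show ?thesis
      using that unfolding \<rho>_def by auto
  qed
  have \<rho>_other: "\<rho> y = a" if "y \<in> V x - F" "x \<in> D - F" for x y
  proof -
    have "\<not> (\<exists>p \<in> D \<inter> F. y \<in> V p)"
      using that Vdisj by (auto simp: disjnt_def)
    then show ?thesis
      using that unfolding \<rho>_def by auto
  qed
  have \<rho>_id: "\<rho> x = x" if "x \<in> F" for x
    using that by (simp add: \<rho>_def)
  have \<rho>_F: "\<rho> x \<in> F" for x
  proof (cases "x \<notin> F \<and> (\<exists>p \<in> D \<inter> F. x \<in> V p)")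
    case True
    then obtain p where "p \<in> D \<inter> F" "x \<in> V p"
      by blast
    then show ?thesis
      using \<rho>_V True by simp
  next
    case False
    then show ?thesis
      using a by (auto simp: \<rho>_def)
  qed
  have "continuous_map K K \<rho>"
  proof (rule continuous_map_if_continuous_at_derived_points)
    show "\<rho> \<in> topspace K \<rightarrow> topspace K"
      using \<rho>_F F by auto
    fix x U assume x: "x \<in> K derived_set_of topspace K" and U: "openin K U" "\<rho> x \<in> U"
    from x have xD: "x \<in> D" unfolding D_def .
    show "\<exists>T. openin K T \<and> x \<in> T \<and> \<rho> ` T \<subseteq> U"
    proof (cases "x \<in> F")
      case True
      have "\<rho> y \<in> U" if "y \<in> V x \<inter> U" for y
        using that \<rho>_id[of y] \<rho>_V[of y x] \<rho>_id[of x] xD True U(2) by (cases "y \<in> F") auto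
      moreover have "x \<in> V x \<inter> U"
        using V[OF xD] \<rho>_id[OF True] U(2) by simp
      ultimately show ?thesis
        using V[OF xD] U(1) by (intro exI[of _ "V x \<inter> U"]) blast
    next
      case False
      have "\<rho> x = a"
        using \<rho>_other[of x x] V[OF xD] xD False by auto
      then have "\<rho> ` (V x - F) \<subseteq> U"
        using \<rho>_other[of _ x] xD False U by auto
      moreover have "openin K (V x - F)"
        using V[OF xD] assms(3) by (intro openin_diff) auto
      ultimately show ?thesis
        using V[OF xD] False by blast
    qed
  qed
  then have "continuous_map K (subtopology K F) \<rho>"
    using \<rho>_F by (intro continuous_map_into_subtopology) auto
  then show thesis
    using that \<rho>_id by blast
qed

lemma bdd_above_abs_Cfun:
  assumes "compactin K F" "f \<in> Cfun K F"
  shows "bdd_above ((\<lambda>y. \<bar>f y\<bar>) ` F)"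
proof -
  have "continuous_map (subtopology K F) euclideanreal f"
    using assms(2) by (simp add: Cfun_def)
  moreover have "compactin (subtopology K F) F"
    using assms(1) compactin_subset_topspace by (simp add: compactin_subtopology)
  ultimately have "compactin euclideanreal (f ` F)"
    by (rule image_compactin[rotated])
  then obtain B where "\<forall>y \<in> f ` F. norm y \<le> B"
    using compact_imp_bounded bounded_iff by (metis compactin_euclidean_iff)
  then show ?thesis
    by (auto simp: bdd_above_def)
qed

lemma regular_extension_operator_retraction:
  assumes "compactin K F"
    and \<rho>: "continuous_map K (subtopology K F) \<rho>" "\<And>x. x \<in> F \<Longrightarrow> \<rho> x = x"
  shows "regular_extension_operator K F (\<lambda>f x. if x \<in> topspace K then f (\<rho> x) else 0)"
    (is "regular_extension_operator K F ?E")
proof -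
  have F: "F \<subseteq> topspace K"
    using assms(1) compactin_subset_topspace by blast
  have \<rho>_F: "\<rho> x \<in> F" if "x \<in> topspace K" for x
    using \<rho>(1) that unfolding continuous_map_def by auto
  show ?thesis
    unfolding regular_extension_operator_def
  proof (intro conjI ballI allI)
    fix f assume f: "f \<in> Cfun K F"
    have "continuous_map (subtopology K F) euclideanreal f"
      using f by (simp add: Cfun_def)
    with \<rho>(1) have "continuous_map K euclideanreal (f \<circ> \<rho>)"
      by (rule continuous_map_compose)
    then have "continuous_map K euclideanreal (?E f)"
      by (rule continuous_map_eq) simp
    then show "?E f \<in> Cfun K (topspace K)"
      by (simp add: Cfun_def)
    show "?E f x = f x" if "x \<in> F" for x
      using that \<rho>(2) F by auto
    show "\<bar>?E f x\<bar> \<le> (SUP y\<in>F. \<bar>f y\<bar>)" if "x \<in> topspace K" for x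
      using cSUP_upper[OF \<rho>_F[OF that] bdd_above_abs_Cfun[OF assms(1) f]] that by simp
  next
    show "?E (\<lambda>x. a * f x + b * g x) = (\<lambda>x. a * ?E f x + b * ?E g x)" for a b f g
      by auto
    show "?E (unit_fun F) = unit_fun (topspace K)"
      using \<rho>_F by (auto simp: unit_fun_def)
  qed
qed

theorem corollary3p13:
  fixes K :: "'a topology"
  assumes "compact_space K" and "Hausdorff_space K"
    and "scattered_space K"
    and "CB_deriv2 K = {}"
  shows "regular_extension_property K"
  unfolding regular_extension_property_def
proof (intro allI impI)
  fix F assume F: "closedin K F \<and> F \<noteq> {}"
  have "finite (K derived_set_of topspace K)"
    using finite_CB_deriv assms Hausdorff_imp_t1_space unfolding CB_deriv_def by blast
  then obtain \<rho> where "continuous_map K (subtopology K F) \<rho>" "\<And>x. x \<in> F \<Longrightarrow> \<rho> x = x"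
    using retraction_onto_closedin_if_finite_derived_set assms(2) F by blast
  moreover have "compactin K F"
    using F assms(1) closedin_compact_space by blast
  ultimately show "\<exists>E. regular_extension_operator K F E"
    using regular_extension_operator_retraction by blast
qed

end
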